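(* The group $\mathsf{Aut}$ of all affine bijections $\mathcal{G}_N\to\mathcal{G}_N$ is finite, and every $\sigma\in\mathsf{Aut}$ is completely determined by its restriction to $\mathcal{I}$.
   Context: $\mathcal{G}_N$ is the set of real symmetric positive semi-definite $N\times N$ matrices with unit diagonal; $\mathcal{I}$ is the set of Ising matrices $\mathbf{s}\mathbf{s}^\top$, $\mathbf{s}\in\{\pm1\}^N$. *)

theory Defs
  imports "HOL-Analysis.Analysis"
begin

text \<open>Elliptope G_N: real symmetric PSD N x N matrices with unit diagonal.
  N is the cardinality of the finite index type 'n.\<close>
definition elliptope :: "(real^'n^'n) set" where
  "elliptope = {X. transpose X = X \<and> (\<forall>x. 0 \<le> x \<bullet> (X *v x)) \<and> (\<forall>i. X $ i $ i = 1)}"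

definition ising :: "(real^'n^'n) set" where
  "ising = {X. \<exists>s::real^'n. (\<forall>i. s $ i = 1 \<or> s $ i = -1) \<and> X = (\<chi> i j. s $ i * s $ j)}"

definition affine_map_on :: "'a::real_vector set \<Rightarrow> ('a \<Rightarrow> 'b::real_vector) \<Rightarrow> bool" where
  "affine_map_on S f \<longleftrightarrow> (\<forall>x\<in>S. \<forall>y\<in>S. \<forall>t::real. 0 \<le> t \<and> t \<le> 1 \<longrightarrow>
      f ((1 - t) *\<^sub>R x + t *\<^sub>R y) = (1 - t) *\<^sub>R f x + t *\<^sub>R f y)"

text \<open>Aut: affine bijections G_N -> G_N, represented as extensional functions
  (value undefined outside G_N), so that distinct elements are distinct maps on G_N.\<close>
definition Aut :: "(real^'n^'n \<Rightarrow> real^'n^'n) set" where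
  "Aut = {f. f \<in> extensional elliptope \<and> bij_betw f elliptope elliptope \<and> affine_map_on elliptope f}"

end

theory Submission
  imports Defs
begin

text \<open>An affine map f on the elliptope satisfies f X = f I + L (X - I) with L linear: X - I is a
  combination, with coefficients in [-1, 1], of the matrices (E_ij + E_ji)/2, and f is affine on
  each segment I \<plusminus> (E_ij + E_ji)/2. These matrices are combinations of differences of Ising
  matrices, so an affine map on the elliptope is determined by its values on the Ising matrices.

  The Ising matrices are exactly the sharp points of the elliptope, the points at which it lies in a
  pointed cone. At an Ising matrix every entry is extremal. At any other point X some off-diagonal
  entry has |X_ij| < 1, and congruence by a shear moves X along a smooth arc inside the elliptope;
  the arc leaves X in two opposite directions, which no pointed cone contains. Affine bijections
  preserve sharp points, so every automorphism permutes the finite set of Ising matrices, and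
  restriction to this set is injective on Aut.\<close>

section \<open>Affine maps on convex sets\<close>

lemma affine_map_onD:
  "affine_map_on S f \<Longrightarrow> x \<in> S \<Longrightarrow> y \<in> S \<Longrightarrow> 0 \<le> t \<Longrightarrow> t \<le> 1 \<Longrightarrow>
    f ((1 - t) *\<^sub>R x + t *\<^sub>R y) = (1 - t) *\<^sub>R f x + t *\<^sub>R f y"
  by (simp add: affine_map_on_def)

lemma affine_map_on_convex_sum:
  fixes f :: "'a::real_vector \<Rightarrow> 'b::real_vector"
  assumes S: "convex S" and f: "affine_map_on S f" and A: "finite A"
    and u: "sum u A = 1" "\<And>a. a \<in> A \<Longrightarrow> 0 \<le> u a" and x: "\<And>a. a \<in> A \<Longrightarrow> x a \<in> S"
  shows "f (\<Sum>a\<in>A. u a *\<^sub>R x a) = (\<Sum>a\<in>A. u a *\<^sub>R f (x a))"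
  using A u x
proof (induction A arbitrary: u rule: finite_induct)
  case empty
  then show ?case by simp
next
  case (insert a A)
  define s where "s = sum u A"
  have s0: "0 \<le> s" unfolding s_def using insert.prems(2) by (simp add: sum_nonneg)
  have ua: "u a = 1 - s" using insert.prems(1) insert.hyps unfolding s_def by simp
  show ?case
  proof (cases "s = 0")
    case True
    then have "\<forall>b\<in>A. u b = 0"
      unfolding s_def using insert.prems(2) insert.hyps(1) by (subst (asm) sum_nonneg_eq_0_iff) auto
    then show ?thesis using insert.hyps ua True by simp
  next
    case False
    define v where "v b = u b / s" for b
    have v1: "sum v A = 1" and v0: "\<And>b. b \<in> A \<Longrightarrow> 0 \<le> v b"
      unfolding v_def using False s0 insert.prems(2) by (simp_all add: s_def sum_divide_distrib[symmetric])
    have xA: "\<And>b. b \<in> A \<Longrightarrow> x b \<in> S" and xa: "x a \<in> S" using insert.prems(3) by simp_all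
    have y: "(\<Sum>b\<in>A. v b *\<^sub>R x b) \<in> S" using convex_sum[OF insert.hyps(1) S v1] v0 xA by auto
    have scale_x: "(\<Sum>b\<in>A. u b *\<^sub>R x b) = s *\<^sub>R (\<Sum>b\<in>A. v b *\<^sub>R x b)"
      and scale_fx: "(\<Sum>b\<in>A. u b *\<^sub>R f (x b)) = s *\<^sub>R (\<Sum>b\<in>A. v b *\<^sub>R f (x b))"
      unfolding v_def scaleR_sum_right using False by (auto intro: sum.cong)
    have s1: "s \<le> 1" using ua insert.prems(2)[of a] by simp
    have "f ((1 - s) *\<^sub>R x a + s *\<^sub>R (\<Sum>b\<in>A. v b *\<^sub>R x b)) =
          (1 - s) *\<^sub>R f (x a) + s *\<^sub>R f (\<Sum>b\<in>A. v b *\<^sub>R x b)"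
      by (rule affine_map_onD[OF f xa y s0 s1])
    then show ?thesis using insert.hyps ua scale_x scale_fx insert.IH[OF v1 v0 xA] by simp
  qed
qed

lemma symmetric_segment_eq:
  "(1 - (1 + c) / 2) *\<^sub>R (a - v) + ((1 + c) / 2) *\<^sub>R (a + v) = a + c *\<^sub>R (v::'a::real_vector)"
proof -
  have "(1 - (1 + c) / 2) *\<^sub>R (a - v) + ((1 + c) / 2) *\<^sub>R (a + v)
      = ((1 - (1 + c) / 2) + (1 + c) / 2) *\<^sub>R a + (((1 + c) / 2) - (1 - (1 + c) / 2)) *\<^sub>R v"
    by (simp only: scaleR_add_left scaleR_diff_left scaleR_add_right scaleR_diff_right)
      (simp add: algebra_simps)
  also have "\<dots> = a + c *\<^sub>R v" by (simp add: field_simps)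
  finally show ?thesis .
qed

lemma convex_symmetric_segment:
  assumes "convex S" "a + v \<in> S" "a - v \<in> S" "\<bar>c\<bar> \<le> 1"
  shows "a + c *\<^sub>R v \<in> S"
  using convexD_alt[OF assms(1,3,2), of "(1 + c) / 2"] assms(4) by (simp add: symmetric_segment_eq)

lemma affine_map_on_symmetric_segment:
  assumes S: "convex S" and f: "affine_map_on S f" and v: "a + v \<in> S" "a - v \<in> S" and c: "\<bar>c\<bar> \<le> 1"
  shows "f (a + c *\<^sub>R v) = f a + (c / 2) *\<^sub>R (f (a + v) - f (a - v))"
proof -
  have seg: "f (a + d *\<^sub>R v) = f (a - v) + ((1 + d) / 2) *\<^sub>R (f (a + v) - f (a - v))"
    if "\<bar>d\<bar> \<le> 1" for d
  proof -
    have "f (a + d *\<^sub>R v) = (1 - (1 + d) / 2) *\<^sub>R f (a - v) + ((1 + d) / 2) *\<^sub>R f (a + v)"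
      using affine_map_onD[OF f v(2,1), of "(1 + d) / 2"] that by (simp add: symmetric_segment_eq)
    then show ?thesis by (simp add: algebra_simps)
  qed
  have "f (a + c *\<^sub>R v) = f a + ((1 + c) / 2 - 1 / 2) *\<^sub>R (f (a + v) - f (a - v))"
    using seg[OF c] seg[of 0] by (simp add: scaleR_diff_left)
  moreover have "(1 + c) / 2 - 1 / 2 = c / 2" by (simp add: field_simps)
  ultimately show ?thesis by simp
qed

lemma affine_map_on_expand:
  fixes f :: "'a::real_vector \<Rightarrow> 'b::real_vector" and v :: "'p \<Rightarrow> 'a"
  assumes S: "convex S" and f: "affine_map_on S f" and P: "finite P" "P \<noteq> {}"
    and dir: "\<And>p. p \<in> P \<Longrightarrow> a + v p \<in> S" "\<And>p. p \<in> P \<Longrightarrow> a - v p \<in> S"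
    and c: "\<And>p. p \<in> P \<Longrightarrow> \<bar>c p\<bar> \<le> 1" and x: "a + (\<Sum>p\<in>P. c p *\<^sub>R v p) \<in> S"
  shows "f (a + (\<Sum>p\<in>P. c p *\<^sub>R v p)) = f a + (\<Sum>p\<in>P. (c p / 2) *\<^sub>R (f (a + v p) - f (a - v p)))"
proof -
  define x where "x = a + (\<Sum>p\<in>P. c p *\<^sub>R v p)"
  define W where "W = (\<Sum>p\<in>P. (c p / 2) *\<^sub>R (f (a + v p) - f (a - v p)))"
  define e where "e = 1 / real (card P)"
  have e: "0 < e" "e \<le> 1" "real (card P) * e = 1"
    unfolding e_def using P by (simp_all add: card_gt_0_iff Suc_leI)
  obtain p0 where "p0 \<in> P" using P(2) by blast
  then have a: "a \<in> S" using convex_symmetric_segment[OF S dir, of p0 0] by simp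
  have y: "a + c p *\<^sub>R v p \<in> S" if "p \<in> P" for p
    using convex_symmetric_segment[OF S dir c] that by blast
  have sum_e: "(\<Sum>p\<in>P. e *\<^sub>R z) = z" for z :: "'c::real_vector"
    using e(3) by (simp add: sum_constant_scaleR)
  \<comment> \<open>The point on the segment from a to x at parameter e is the average of the points a + c p v p.\<close>
  have "(1 - e) *\<^sub>R a + e *\<^sub>R x = (\<Sum>p\<in>P. e *\<^sub>R (a + c p *\<^sub>R v p))"
    unfolding x_def by (simp add: scaleR_add_right sum.distrib scaleR_sum_right sum_e algebra_simps)
  then have "f ((1 - e) *\<^sub>R a + e *\<^sub>R x) = (\<Sum>p\<in>P. e *\<^sub>R f (a + c p *\<^sub>R v p))"
    using affine_map_on_convex_sum[OF S f P(1), of "\<lambda>_. e"] e y by (simp add: sum_e)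
  also have "\<dots> = f a + e *\<^sub>R W"
    unfolding W_def using affine_map_on_symmetric_segment[OF S f dir c]
    by (simp add: scaleR_add_right sum.distrib scaleR_sum_right sum_e)
  finally have "(1 - e) *\<^sub>R f a + e *\<^sub>R f x = f a + e *\<^sub>R W"
    using affine_map_onD[OF f a x[folded x_def], of e] e by simp
  then have "e *\<^sub>R f x = e *\<^sub>R (f a + W)" by (simp add: algebra_simps)
  then show ?thesis unfolding x_def W_def using e by simp
qed

lemma affine_map_on_inv_into:
  assumes S: "convex S" and f: "affine_map_on S f" and inj: "inj_on f S"
  shows "affine_map_on (f ` S) (inv_into S f)"
  unfolding affine_map_on_def
proof (intro ballI allI impI)
  fix x y and t :: real assume x: "x \<in> f ` S" and y: "y \<in> f ` S" and t: "0 \<le> t \<and> t \<le> 1"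
  then obtain x' y' where x': "x' \<in> S" "x = f x'" and y': "y' \<in> S" "y = f y'" by blast
  have "(1 - t) *\<^sub>R x' + t *\<^sub>R y' \<in> S" using convexD_alt[OF S x'(1) y'(1)] t by simp
  moreover have "f ((1 - t) *\<^sub>R x' + t *\<^sub>R y') = (1 - t) *\<^sub>R x + t *\<^sub>R y"
    using affine_map_onD[OF f x'(1) y'(1)] t x'(2) y'(2) by simp
  ultimately show "inv_into S f ((1 - t) *\<^sub>R x + t *\<^sub>R y) =
      (1 - t) *\<^sub>R inv_into S f x + t *\<^sub>R inv_into S f y"
    using inv_into_f_f[OF inj] x' y' by metis
qed

section \<open>Sharp points\<close>

text \<open>For a convex body these are the points whose normal cone has nonempty interior.\<close>

definition sharp_point :: "'a::real_normed_vector set \<Rightarrow> 'a \<Rightarrow> bool" where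
  "sharp_point S x \<longleftrightarrow>
    (\<exists>(l::'a \<Rightarrow> real) c. linear l \<and> 0 < c \<and> (\<forall>y\<in>S. c * norm (y - x) \<le> l (y - x)))"

lemma sharp_point_image:
  fixes f :: "'a::euclidean_space \<Rightarrow> 'b::euclidean_space"
  assumes sharp: "sharp_point S x" and x: "x \<in> S"
    and L: "linear L" "\<And>y z. y \<in> S \<Longrightarrow> z \<in> S \<Longrightarrow> f y - f z = L (y - z)"
    and M: "linear M" "\<And>y z. y \<in> f ` S \<Longrightarrow> z \<in> f ` S \<Longrightarrow> g y - g z = M (y - z)"
    and gf: "\<And>y. y \<in> S \<Longrightarrow> g (f y) = y"
  shows "sharp_point (f ` S) (f x)"
proof -
  obtain l c where l: "linear l" and c: "0 < c" and lc: "\<forall>y\<in>S. c * norm (y - x) \<le> l (y - x)"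
    using sharp unfolding sharp_point_def by blast
  obtain B where B: "0 < B" "\<And>v. norm (L v) \<le> B * norm v" using linear_bounded_pos[OF L(1)] by blast
  have "c / B * norm (f y - f x) \<le> (l \<circ> M) (f y - f x)" if y: "y \<in> S" for y
  proof -
    have "c / B * norm (f y - f x) \<le> c / B * (B * norm (y - x))"
      using B(2)[of "y - x"] L(2)[OF y x] c B by (intro mult_left_mono) auto
    also have "\<dots> \<le> l (y - x)" using lc y B by simp
    also have "\<dots> = (l \<circ> M) (f y - f x)" using M(2)[of "f y" "f x"] gf x y by simp
    finally show ?thesis .
  qed
  then show ?thesis unfolding sharp_point_def
    using linear_compose[OF M(1) l] c B by (intro exI[of _ "l \<circ> M"] exI[of _ "c / B"]) auto
qed

lemma inner_matrix_vector_sum: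
  "(x::real^'n) \<bullet> (A *v y) = (\<Sum>a\<in>UNIV. \<Sum>b\<in>UNIV. x$a * A$a$b * y$b)"
  by (simp add: inner_vec_def matrix_vector_mult_def sum_distrib_left mult.assoc mult.left_commute)

lemma quadratic_form_add:
  "(x::real^'n) \<bullet> ((a *\<^sub>R A + b *\<^sub>R B) *v x) = a * (x \<bullet> (A *v x)) + b * (x \<bullet> (B *v x))"
  unfolding inner_matrix_vector_sum by (simp add: sum_distrib_left sum.distrib algebra_simps)

lemma quadratic_form_two_axes:
  "(p *\<^sub>R axis a 1 + q *\<^sub>R axis b 1) \<bullet> (X *v (p *\<^sub>R axis a 1 + q *\<^sub>R axis b 1))
    = p * p * X$a$a + p * q * X$a$b + q * p * X$b$a + q * q * X$b$b"
  by (simp add: matrix_vector_right_distrib matrix_vector_mult_basis inner_add_left inner_add_right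
      inner_axis' column_def algebra_simps)

lemma matrix_vector_two_axes_nth:
  "(X *v (p *\<^sub>R axis a 1 + q *\<^sub>R axis c 1)) $ b = p * X$b$a + q * X$b$c"
  by (simp add: matrix_vector_right_distrib matrix_vector_mult_scaleR matrix_vector_mult_basis column_def)

lemma symmetric_matrix_entry: "transpose X = X \<Longrightarrow> X$i$j = X$j$i"
  by (metis transpose_def vec_lambda_beta)

lemma psd_kernel_of_null_quadratic_form:
  fixes X :: "real^'n^'n"
  assumes sym: "transpose X = X" and psd: "\<And>y. 0 \<le> y \<bullet> (X *v y)" and null: "x \<bullet> (X *v x) = 0"
  shows "X *v x = 0"
proof -
  define y where "y = X *v x"
  define a where "a = y \<bullet> (X *v y)"
  have a: "0 \<le> a" unfolding a_def by (rule psd)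
  have "x \<bullet> (X *v y) = y \<bullet> (X *v x)"
    unfolding inner_matrix_vector_sum using symmetric_matrix_entry[OF sym]
    by (subst sum.swap) (simp add: mult.commute mult.left_commute)
  then have expand: "(x + t *\<^sub>R y) \<bullet> (X *v (x + t *\<^sub>R y)) = 2 * t * (y \<bullet> y) + t\<^sup>2 * a" for t
    using null unfolding a_def y_def
    by (simp add: matrix_vector_right_distrib inner_add_left inner_add_right algebra_simps power2_eq_square)
  define t where "t = - (y \<bullet> y) / (a + 1)"
  have t: "t * (a + 1) = - (y \<bullet> y)" unfolding t_def using a by simp
  have "0 \<le> (a + 1)\<^sup>2 * (2 * t * (y \<bullet> y) + t\<^sup>2 * a)"
    using psd[of "x + t *\<^sub>R y"] unfolding expand by simp
  also have "\<dots> = 2 * (y \<bullet> y) * (a + 1) * (t * (a + 1)) + a * (t * (a + 1))\<^sup>2"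
    by (simp add: algebra_simps power2_eq_square)
  also have "\<dots> = - ((y \<bullet> y)\<^sup>2 * (a + 2))"
    unfolding t by (simp add: algebra_simps power2_eq_square)
  finally have "(y \<bullet> y)\<^sup>2 * (a + 2) \<le> 0" by simp
  then have "y \<bullet> y = 0" using a by (simp add: mult_le_0_iff)
  then show ?thesis unfolding y_def by simp
qed

lemma congruence_psd:
  fixes X P :: "real^'n^'n"
  assumes "transpose X = X" "\<And>y. 0 \<le> y \<bullet> (X *v y)"
  shows "transpose (P ** X ** transpose P) = P ** X ** transpose P"
    "0 \<le> x \<bullet> ((P ** X ** transpose P) *v x)"
proof -
  show "transpose (P ** X ** transpose P) = P ** X ** transpose P"
    using assms(1) by (simp add: matrix_transpose_mul matrix_mul_assoc)
  have "x \<bullet> ((P ** X ** transpose P) *v x) = x \<bullet> (P *v (X *v (transpose P *v x)))"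
    by (simp only: matrix_vector_mul_assoc[symmetric])
  also have "\<dots> = (transpose P *v x) \<bullet> (X *v (transpose P *v x))"
    by (simp add: dot_lmul_matrix[symmetric] transpose_matrix_vector)
  finally show "0 \<le> x \<bullet> ((P ** X ** transpose P) *v x)" using assms(2) by simp
qed

lemma norm_le_sum_abs_entries: "norm (M :: real^'n^'m) \<le> (\<Sum>a\<in>UNIV. \<Sum>b\<in>UNIV. \<bar>M$a$b\<bar>)"
proof -
  have "norm M \<le> (\<Sum>a\<in>UNIV. norm (M$a))" unfolding norm_vec_def[of M] by (rule L2_set_le_sum) simp
  also have "\<dots> \<le> (\<Sum>a\<in>UNIV. \<Sum>b\<in>UNIV. \<bar>M$a$b\<bar>)" by (rule sum_mono) (rule norm_le_l1_cart)
  finally show ?thesis .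
qed

lemma abs_entry_le_norm: "\<bar>(M :: real^'n^'m)$i$j\<bar> \<le> norm M"
  using component_le_norm_cart[of "M$i" j] Finite_Cartesian_Product.norm_nth_le[of M i] by linarith

section \<open>The elliptope and its affine maps\<close>

lemma elliptopeD:
  assumes "X \<in> elliptope"
  shows "transpose X = X" "\<And>x. 0 \<le> x \<bullet> (X *v x)" "\<And>i. X$i$i = 1"
  using assms by (auto simp: elliptope_def)

lemma elliptope_entry_bound:
  assumes X: "X \<in> elliptope" shows "\<bar>X$i$j\<bar> \<le> 1"
proof -
  have s: "X$j$i = X$i$j" and d: "X$i$i = 1" "X$j$j = 1"
    using elliptopeD[OF X] symmetric_matrix_entry by metis+
  have "0 \<le> 2 + 2 * X$i$j" "0 \<le> 2 - 2 * X$i$j"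
    using elliptopeD(2)[OF X, of "1 *\<^sub>R axis i 1 + 1 *\<^sub>R axis j 1"]
      elliptopeD(2)[OF X, of "1 *\<^sub>R axis i 1 + (-1) *\<^sub>R axis j 1"]
    unfolding quadratic_form_two_axes s d by simp_all
  then show ?thesis by linarith
qed

lemma convex_elliptope: "convex elliptope"
  unfolding convex_def
proof (intro ballI allI impI)
  fix X Y :: "real^'n^'n" and u v :: real
  assume X: "X \<in> elliptope" and Y: "Y \<in> elliptope" and uv: "0 \<le> u" "0 \<le> v" "u + v = 1"
  show "u *\<^sub>R X + v *\<^sub>R Y \<in> elliptope"
    unfolding elliptope_def
  proof (intro CollectI conjI allI)
    show "transpose (u *\<^sub>R X + v *\<^sub>R Y) = u *\<^sub>R X + v *\<^sub>R Y"
      using elliptopeD(1)[OF X] elliptopeD(1)[OF Y] by (simp add: transpose_def vec_eq_iff)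
    show "0 \<le> x \<bullet> ((u *\<^sub>R X + v *\<^sub>R Y) *v x)" for x
      unfolding quadratic_form_add using elliptopeD(2)[OF X] elliptopeD(2)[OF Y] uv by simp
    show "(u *\<^sub>R X + v *\<^sub>R Y)$i$i = 1" for i
      using elliptopeD(3)[OF X] elliptopeD(3)[OF Y] uv by simp
  qed
qed

lemma elliptope_diff:
  assumes "X \<in> elliptope" "Y \<in> elliptope"
  shows "transpose (X - Y) = X - Y" "(X - Y)$i$i = 0"
  using elliptopeD[OF assms(1)] elliptopeD[OF assms(2)] by (auto simp: vec_eq_iff transpose_def)

definition sym_unit :: "'n \<Rightarrow> 'n \<Rightarrow> real^'n^'n" where
  "sym_unit i j = (\<chi> a b. if i \<noteq> j \<and> (a = i \<and> b = j \<or> a = j \<and> b = i) then 1/2 else 0)"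

lemma sym_unit_diag [simp]: "sym_unit i i = 0"
  by (simp add: sym_unit_def vec_eq_iff)

lemma quadratic_form_sym_unit: "(x::real^'n) \<bullet> (sym_unit i j *v x) = (if i = j then 0 else x$i * x$j)"
proof (cases "i = j")
  case False
  have "x$a * sym_unit i j$a$b * x$b =
      (if b = j then (if a = i then x$i * x$j / 2 else 0) else 0) +
      (if b = i then (if a = j then x$i * x$j / 2 else 0) else 0)" for a b
    using False by (auto simp: sym_unit_def)
  then show ?thesis unfolding inner_matrix_vector_sum using False by (simp add: sum.distrib)
qed simp

lemma mat_1_add_sym_unit_in_elliptope:
  assumes c: "\<bar>c\<bar> \<le> 1" shows "mat 1 + c *\<^sub>R sym_unit i j \<in> (elliptope :: (real^'n^'n) set)"
  unfolding elliptope_def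
proof (intro CollectI conjI allI)
  show "transpose (mat 1 + c *\<^sub>R sym_unit i j) = mat 1 + c *\<^sub>R sym_unit i j"
    by (auto simp: vec_eq_iff transpose_def mat_def sym_unit_def)
  show "(mat 1 + c *\<^sub>R sym_unit i j) $ a $ a = 1" for a
    by (auto simp: sym_unit_def mat_def)
  fix x :: "real^'n"
  have "0 \<le> x \<bullet> x + c * (x$i * x$j)" if ij: "i \<noteq> j"
  proof -
    have "x$i * x$i + x$j * x$j = (\<Sum>a\<in>{i,j}. x$a * x$a)" using ij by simp
    also have "\<dots> \<le> (\<Sum>a\<in>UNIV. x$a * x$a)" by (rule sum_mono2) auto
    finally have "x$i * x$i + x$j * x$j \<le> x \<bullet> x" by (simp add: inner_vec_def)
    moreover have "\<bar>c * (x$i * x$j)\<bar> \<le> \<bar>x$i * x$j\<bar>"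
      unfolding abs_mult[of c] by (rule mult_left_le_one_le) (use c in auto)
    moreover have "2 * \<bar>x$i * x$j\<bar> \<le> x$i * x$i + x$j * x$j"
      using sum_squares_bound[of "\<bar>x$i\<bar>" "\<bar>x$j\<bar>"] by (simp add: abs_mult power2_eq_square)
    ultimately show ?thesis by linarith
  qed
  then show "0 \<le> x \<bullet> ((mat 1 + c *\<^sub>R sym_unit i j) *v x)"
    using quadratic_form_add[of x 1 "mat 1" c "sym_unit i j"] by (simp add: quadratic_form_sym_unit)
qed

lemma sym_unit_expansion:
  fixes D :: "real^'n^'n"
  assumes D: "transpose D = D" "\<And>i. D$i$i = 0"
  shows "(\<Sum>(i,j)\<in>UNIV. D$i$j *\<^sub>R sym_unit i j) = D"
proof -
  have "(\<Sum>i\<in>UNIV. \<Sum>j\<in>UNIV. D$i$j *\<^sub>R sym_unit i j) $ a $ b = D $ a $ b" for a b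
  proof -
    have "D$i$j * sym_unit i j$a$b =
        (if j = b then (if i = a then (if a \<noteq> b then D$a$b/2 else 0) else 0) else 0) +
        (if j = a then (if i = b then (if a \<noteq> b then D$b$a/2 else 0) else 0) else 0)" for i j
      by (auto simp: sym_unit_def)
    then show ?thesis using symmetric_matrix_entry[OF D(1), of a b] D(2)[of a]
      by (cases "a = b") (simp_all add: sum_component sum.distrib)
  qed
  then have "(\<Sum>i\<in>UNIV. \<Sum>j\<in>UNIV. D$i$j *\<^sub>R sym_unit i j) = D" by (simp add: vec_eq_iff)
  then show ?thesis by (simp add: sum.cartesian_product)
qed

lemma linear_sym_unit_expansion:
  assumes L: "linear L" and D: "transpose D = D" "\<And>i. D$i$i = 0"
  shows "L D = (\<Sum>(i,j)\<in>UNIV. D$i$j *\<^sub>R L (sym_unit i j))"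
proof -
  have "L D = L (\<Sum>(i,j)\<in>UNIV. D$i$j *\<^sub>R sym_unit i j)" using sym_unit_expansion[OF D] by simp
  then show ?thesis by (simp add: linear_sum[OF L] linear_scale[OF L] split_def)
qed

lemma elliptope_affine_map_linear:
  fixes f :: "real^'n^'n \<Rightarrow> 'b::real_vector"
  assumes f: "affine_map_on elliptope f"
  obtains L where "linear L" "\<And>X Y. X \<in> elliptope \<Longrightarrow> Y \<in> elliptope \<Longrightarrow> f X - f Y = L (X - Y)"
proof -
  define L where "L D = (\<Sum>(i,j)\<in>UNIV. (D$i$j / 2) *\<^sub>R (f (mat 1 + sym_unit i j) - f (mat 1 - sym_unit i j)))"
    for D :: "real^'n^'n"
  have lin: "linear L" unfolding L_def
    by (rule linearI) (simp_all add: case_prod_beta add_divide_distrib scaleR_add_left sum.distrib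
        scaleR_sum_right)
  have base: "f X = f (mat 1) + L (X - mat 1)" if X: "X \<in> elliptope" for X :: "real^'n^'n"
  proof -
    define D where "D = X - mat 1"
    have D: "transpose D = D" "\<And>i. D$i$i = 0"
      unfolding D_def using elliptopeD[OF X] by (auto simp: vec_eq_iff transpose_def mat_def)
    have bound: "\<bar>D$i$j\<bar> \<le> 1" for i j
      unfolding D_def using elliptope_entry_bound[OF X, of i j] elliptopeD(3)[OF X] by (simp add: mat_def)
    have X_eq: "X = mat 1 + (\<Sum>p\<in>UNIV. D $ fst p $ snd p *\<^sub>R sym_unit (fst p) (snd p))"
      using sym_unit_expansion[OF D] unfolding D_def split_def by simp
    have "f (mat 1 + (\<Sum>p\<in>UNIV. D $ fst p $ snd p *\<^sub>R sym_unit (fst p) (snd p))) = f (mat 1) +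
        (\<Sum>p\<in>UNIV. (D $ fst p $ snd p / 2) *\<^sub>R
           (f (mat 1 + sym_unit (fst p) (snd p)) - f (mat 1 - sym_unit (fst p) (snd p))))"
      by (rule affine_map_on_expand[OF convex_elliptope f])
        (use X_eq X bound mat_1_add_sym_unit_in_elliptope[of 1] mat_1_add_sym_unit_in_elliptope[of "-1"]
          in simp_all)
    then show ?thesis unfolding L_def split_def D_def[symmetric] using X_eq by simp
  qed
  show thesis
  proof (rule that[OF lin])
    fix X Y :: "real^'n^'n" assume "X \<in> elliptope" "Y \<in> elliptope"
    then show "f X - f Y = L (X - Y)"
      using base linear_diff[OF lin, of "X - mat 1" "Y - mat 1"] by simp
  qed
qed

section \<open>Ising matrices determine affine maps\<close>

definition ising_matrix :: "real^'n \<Rightarrow> real^'n^'n" where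
  "ising_matrix s = (\<chi> i j. s$i * s$j)"

definition sign_vector :: "real^'n \<Rightarrow> bool" where
  "sign_vector s \<longleftrightarrow> (\<forall>i. s$i = 1 \<or> s$i = -1)"

definition negate_at :: "'n \<Rightarrow> real^'n \<Rightarrow> real^'n" where
  "negate_at k s = (\<chi> a. if a = k then - s$a else s$a)"

lemma ising_eq: "ising = ising_matrix ` Collect sign_vector"
  unfolding ising_def ising_matrix_def sign_vector_def by auto

lemma sign_vector_one: "sign_vector 1"
  by (simp add: sign_vector_def)

lemma sign_vector_negate_at: "sign_vector s \<Longrightarrow> sign_vector (negate_at k s)"
  by (auto simp: sign_vector_def negate_at_def)

lemma sign_vector_square: "sign_vector s \<Longrightarrow> s$i * s$i = 1"
  unfolding sign_vector_def by (metis mult_1 mult_minus1 minus_minus)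

lemma ising_matrix_in_elliptope:
  assumes s: "sign_vector s" shows "ising_matrix s \<in> elliptope"
  unfolding elliptope_def
proof (intro CollectI conjI allI)
  show "transpose (ising_matrix s) = ising_matrix s"
    by (simp add: vec_eq_iff transpose_def ising_matrix_def mult.commute)
  show "0 \<le> x \<bullet> (ising_matrix s *v x)" for x
  proof -
    have "x \<bullet> (ising_matrix s *v x) = (\<Sum>a\<in>UNIV. x$a * s$a) * (\<Sum>b\<in>UNIV. x$b * s$b)"
      unfolding inner_matrix_vector_sum ising_matrix_def by (simp add: sum_product algebra_simps)
    then show ?thesis by simp
  qed
  show "ising_matrix s $ i $ i = 1" for i
    using sign_vector_square[OF s] by (simp add: ising_matrix_def)
qed

lemma ising_matrix_in_ising: "sign_vector s \<Longrightarrow> ising_matrix s \<in> ising"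
  by (auto simp: ising_eq)

lemma ising_subset_elliptope: "ising \<subseteq> elliptope"
  unfolding ising_eq using ising_matrix_in_elliptope by auto

lemma finite_ising: "finite (ising :: (real^'n^'n) set)"
proof -
  have "(Collect sign_vector :: (real^'n) set) \<subseteq> vec_lambda ` (UNIV \<rightarrow>\<^sub>E {1, -1})"
  proof
    fix s :: "real^'n" assume "s \<in> Collect sign_vector"
    then have "vec_nth s \<in> UNIV \<rightarrow>\<^sub>E {1, -1}" by (auto simp: sign_vector_def)
    then show "s \<in> vec_lambda ` (UNIV \<rightarrow>\<^sub>E {1, -1})" by (rule rev_image_eqI) simp
  qed
  then have "finite (Collect sign_vector :: (real^'n) set)"
    by (rule finite_subset) (intro finite_imageI finite_PiE; simp)
  then show ?thesis unfolding ising_eq by simp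
qed

lemma sym_unit_ising_combination:
  assumes "i \<noteq> j"
  shows "8 *\<^sub>R sym_unit i j =
    (ising_matrix 1 - ising_matrix (negate_at i 1)) -
    (ising_matrix (negate_at j 1) - ising_matrix (negate_at i (negate_at j 1)))"
  using assms by (auto simp: vec_eq_iff sym_unit_def ising_matrix_def negate_at_def)

lemma elliptope_linearization_sym_unit:
  fixes f :: "real^'n^'n \<Rightarrow> 'b::real_vector"
  assumes L: "linear L" "\<And>X Y. X \<in> elliptope \<Longrightarrow> Y \<in> elliptope \<Longrightarrow> f X - f Y = L (X - Y)"
    and ij: "i \<noteq> j"
  shows "8 *\<^sub>R L (sym_unit i j) =
    (f (ising_matrix 1) - f (ising_matrix (negate_at i 1))) -
    (f (ising_matrix (negate_at j 1)) - f (ising_matrix (negate_at i (negate_at j 1))))"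
proof -
  have diff: "L (ising_matrix s - ising_matrix t) = f (ising_matrix s) - f (ising_matrix t)"
    if "sign_vector s" "sign_vector t" for s t :: "real^'n"
    using that by (simp add: L(2) ising_matrix_in_elliptope)
  have "8 *\<^sub>R L (sym_unit i j) =
      L (ising_matrix 1 - ising_matrix (negate_at i 1)) -
      L (ising_matrix (negate_at j 1) - ising_matrix (negate_at i (negate_at j 1)))"
    unfolding linear_scale[OF L(1), symmetric] sym_unit_ising_combination[OF ij]
    by (rule linear_diff[OF L(1)])
  then show ?thesis by (simp add: diff sign_vector_one sign_vector_negate_at)
qed

lemma affine_maps_eq_on_elliptope_if_eq_on_ising:
  fixes f g :: "real^'n^'n \<Rightarrow> 'b::real_vector"
  assumes f: "affine_map_on elliptope f" and g: "affine_map_on elliptope g"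
    and eq: "\<And>X. X \<in> ising \<Longrightarrow> f X = g X" and X: "X \<in> elliptope"
  shows "f X = g X"
proof -
  obtain Lf where Lf: "linear Lf" "\<And>X Y. X \<in> elliptope \<Longrightarrow> Y \<in> elliptope \<Longrightarrow> f X - f Y = Lf (X - Y)"
    using elliptope_affine_map_linear[OF f] by blast
  obtain Lg where Lg: "linear Lg" "\<And>X Y. X \<in> elliptope \<Longrightarrow> Y \<in> elliptope \<Longrightarrow> g X - g Y = Lg (X - Y)"
    using elliptope_affine_map_linear[OF g] by blast
  have sym_unit: "Lf (sym_unit i j) = Lg (sym_unit i j)" for i j
  proof (cases "i = j")
    case False
    have fg: "f (ising_matrix s) = g (ising_matrix s)" if "sign_vector s" for s
      using eq ising_matrix_in_ising[OF that] .
    have "8 *\<^sub>R Lf (sym_unit i j) =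
        (f (ising_matrix 1) - f (ising_matrix (negate_at i 1))) -
        (f (ising_matrix (negate_at j 1)) - f (ising_matrix (negate_at i (negate_at j 1))))"
      by (rule elliptope_linearization_sym_unit[OF Lf False])
    also have "\<dots> =
        (g (ising_matrix 1) - g (ising_matrix (negate_at i 1))) -
        (g (ising_matrix (negate_at j 1)) - g (ising_matrix (negate_at i (negate_at j 1))))"
      by (simp add: fg sign_vector_one sign_vector_negate_at)
    also have "\<dots> = 8 *\<^sub>R Lg (sym_unit i j)"
      by (rule elliptope_linearization_sym_unit[OF Lg False, symmetric])
    finally show ?thesis by (rule scaleR_left_imp_eq[rotated]) simp
  qed (simp add: linear_0[OF Lf(1)] linear_0[OF Lg(1)])
  define J where "J = ising_matrix (1 :: real^'n)"
  have J: "J \<in> ising" "J \<in> elliptope"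
    unfolding J_def using ising_matrix_in_ising ising_matrix_in_elliptope sign_vector_one by blast+
  have "Lf (X - J) = Lg (X - J)"
    using linear_sym_unit_expansion[OF Lf(1)] linear_sym_unit_expansion[OF Lg(1)]
      elliptope_diff[OF X J(2)] sym_unit by simp
  then show ?thesis using Lf(2)[OF X J(2)] Lg(2)[OF X J(2)] eq[OF J(1)] by (metis diff_add_cancel)
qed

section \<open>The sharp points of the elliptope are the Ising matrices\<close>

lemma ising_matrix_sharp_point:
  fixes s :: "real^'n"
  assumes s: "sign_vector s" shows "sharp_point elliptope (ising_matrix s)"
proof -
  define l where "l D = - (\<Sum>a\<in>UNIV. \<Sum>b\<in>UNIV. s$a * s$b * D$a$b)" for D :: "real^'n^'n"
  have lin: "linear l" unfolding l_def
    by (rule linearI) (simp_all add: algebra_simps sum.distrib sum_distrib_left sum_negf)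
  have "norm (Y - ising_matrix s) \<le> l (Y - ising_matrix s)" if Y: "Y \<in> elliptope" for Y
  proof -
    have "\<bar>(Y - ising_matrix s)$a$b\<bar> = - (s$a * s$b * (Y - ising_matrix s)$a$b)" for a b
    proof -
      have "s$a = 1 \<or> s$a = -1" "s$b = 1 \<or> s$b = -1" using s unfolding sign_vector_def by blast+
      then show ?thesis using elliptope_entry_bound[OF Y, of a b]
        by (elim disjE) (auto simp: ising_matrix_def abs_if)
    qed
    then show ?thesis using norm_le_sum_abs_entries[of "Y - ising_matrix s"] by (simp add: l_def sum_negf)
  qed
  then show ?thesis unfolding sharp_point_def using lin by (intro exI[of _ l] exI[of _ 1]) auto
qed

definition row_shear :: "'n \<Rightarrow> 'n \<Rightarrow> real \<Rightarrow> real \<Rightarrow> real^'n^'n" where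
  "row_shear i j \<alpha> \<beta> = (\<chi> a b. if a = i then (if b = i then \<alpha> else if b = j then \<beta> else 0)
                                  else (if a = b then 1 else 0))"

lemma row_shear_row_sum:
  assumes "i \<noteq> j"
  shows "(\<Sum>k\<in>UNIV. row_shear i j \<alpha> \<beta> $a$k * w k) = (if a = i then \<alpha> * w i + \<beta> * w j else w a)"
proof (cases "a = i")
  case True
  have "row_shear i j \<alpha> \<beta> $a$k * w k = (if k = i then \<alpha> * w i else 0) + (if k = j then \<beta> * w j else 0)" for k
    using True assms by (auto simp: row_shear_def)
  then show ?thesis using True by (simp add: sum.distrib)
next
  case False
  have "row_shear i j \<alpha> \<beta> $a$k * w k = (if k = a then w a else 0)" for k
    using False by (auto simp: row_shear_def)
  then show ?thesis using False by simp
qed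

lemma row_shear_congruence_entry:
  fixes X :: "real^'n^'n" and \<alpha> \<beta> :: real
  assumes "i \<noteq> j"
  defines "P \<equiv> row_shear i j \<alpha> \<beta>"
  shows "(P ** X ** transpose P) $a$b =
    (if b = i then \<alpha> * (if a = i then \<alpha> * X$i$i + \<beta> * X$j$i else X$a$i)
                 + \<beta> * (if a = i then \<alpha> * X$i$j + \<beta> * X$j$j else X$a$j)
     else (if a = i then \<alpha> * X$i$b + \<beta> * X$j$b else X$a$b))"
proof -
  have PX: "(P ** X) $a$l = (if a = i then \<alpha> * X$i$l + \<beta> * X$j$l else X$a$l)" for a l
    unfolding matrix_matrix_mult_def P_def using row_shear_row_sum[OF assms(1), of \<alpha> \<beta> a "\<lambda>k. X$k$l"] by simp
  have "(P ** X ** transpose P) $a$b = (\<Sum>l\<in>UNIV. P $b$l * (P ** X)$a$l)"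
    unfolding matrix_matrix_mult_def[of "P ** X"] by (simp add: transpose_def mult.commute)
  also have "\<dots> = (if b = i then \<alpha> * (P ** X)$a$i + \<beta> * (P ** X)$a$j else (P ** X)$a$b)"
    unfolding P_def by (rule row_shear_row_sum[OF assms(1)])
  finally show ?thesis unfolding PX .
qed

definition cross_entries :: "real^'n^'n \<Rightarrow> 'n \<Rightarrow> real^'n^'n" where
  "cross_entries X i = (\<chi> a b. if (a = i) \<noteq> (b = i) then X$a$b else 0)"

definition cross_direction :: "real^'n^'n \<Rightarrow> 'n \<Rightarrow> 'n \<Rightarrow> real^'n^'n" where
  "cross_direction X i j = (\<chi> a b. if a = i \<and> b \<noteq> i then X$j$b - X$i$j * X$i$b
                              else if b = i \<and> a \<noteq> i then X$a$j - X$i$j * X$a$i else 0)"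

lemma elliptope_circle_curve:
  fixes X :: "real^'n^'n"
  assumes X: "X \<in> elliptope" and ij: "i \<noteq> j" and c: "\<bar>X$i$j\<bar> < 1" and circle: "\<kappa>\<^sup>2 + \<mu>\<^sup>2 = 1"
  shows "X + (\<kappa> - 1) *\<^sub>R cross_entries X i + (\<mu> / sqrt (1 - (X$i$j)\<^sup>2)) *\<^sub>R cross_direction X i j
    \<in> elliptope"
proof -
  define r where "r = sqrt (1 - (X$i$j)\<^sup>2)"
  have c2: "(X$i$j)\<^sup>2 < 1" using c by (simp add: abs_square_less_1)
  then have rr: "r\<^sup>2 = 1 - (X$i$j)\<^sup>2" and r0: "0 < r" unfolding r_def by simp_all
  define \<beta> where "\<beta> = \<mu> / r"
  define \<alpha> where "\<alpha> = \<kappa> - X$i$j * \<beta>"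
  have sx: "X$b$a = X$a$b" for a b using symmetric_matrix_entry[OF elliptopeD(1)[OF X]] by metis
  have dx: "X$a$a = 1" for a using elliptopeD(3)[OF X] by simp
  have unit: "\<alpha> * (\<alpha> * 1 + \<beta> * X$i$j) + \<beta> * (\<alpha> * X$i$j + \<beta> * 1) = 1"
  proof -
    have "\<alpha> * (\<alpha> * 1 + \<beta> * X$i$j) + \<beta> * (\<alpha> * X$i$j + \<beta> * 1) = \<kappa>\<^sup>2 + (\<beta> * r)\<^sup>2"
      unfolding \<alpha>_def power_mult_distrib rr by (simp add: algebra_simps power2_eq_square)
    also have "\<beta> * r = \<mu>"
      unfolding \<beta>_def using r0 by simp
    finally show ?thesis using circle by simp
  qed
  \<comment> \<open>The shear replaces row i by \<alpha> e_i + \<beta> e_j; the congruence keeps the unit diagonal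
    because \<kappa>^2 + \<mu>^2 = 1.\<close>
  define Y where "Y = X + (\<kappa> - 1) *\<^sub>R cross_entries X i + \<beta> *\<^sub>R cross_direction X i j"
  have Y: "Y = row_shear i j \<alpha> \<beta> ** X ** transpose (row_shear i j \<alpha> \<beta>)"
    unfolding vec_eq_iff row_shear_congruence_entry[OF ij]
    using unit ij sx[of i j] dx[of i] dx[of j]
    by (auto simp: Y_def cross_entries_def cross_direction_def \<alpha>_def algebra_simps)
  have "Y \<in> elliptope"
    unfolding elliptope_def
  proof (intro CollectI conjI allI)
    show "transpose Y = Y" "0 \<le> x \<bullet> (Y *v x)" for x
      unfolding Y using congruence_psd[OF elliptopeD(1,2)[OF X]] by blast+
    show "Y $ a $ a = 1" for a unfolding Y_def using dx by (simp add: cross_entries_def cross_direction_def)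
  qed
  then show ?thesis unfolding Y_def \<beta>_def r_def .
qed

text \<open>Adding the bounds at (\<kappa>, \<mu>) and (\<kappa>, -\<mu>) gives C \<mu> r \<le> (\<kappa> - 1) a, which fails near
  (1, 0) because 1 - \<kappa> is of order \<mu>^2 there.\<close>

lemma unit_circle_no_linear_bound:
  fixes C r c a b :: real
  assumes C: "0 < C" and r: "0 < r"
    and bound: "\<And>\<kappa> \<mu>. \<kappa>\<^sup>2 + \<mu>\<^sup>2 = 1 \<Longrightarrow> C * \<bar>(\<kappa> - 1) * c + \<mu> * r\<bar> \<le> (\<kappa> - 1) * a + \<mu> * b"
  shows False
proof -
  define u where "u = C * r / (2 * (\<bar>a\<bar> + 1))"
  have u: "0 < u" "u * \<bar>a\<bar> < C * r"
  proof -
    show "0 < u" unfolding u_def using C r by (simp add: add_pos_nonneg)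
    have "u * \<bar>a\<bar> = C * r * (\<bar>a\<bar> / (2 * (\<bar>a\<bar> + 1)))" unfolding u_def by simp
    also have "\<dots> < C * r * 1"
      by (rule mult_strict_left_mono) (use C r in \<open>auto simp: field_simps\<close>)
    finally show "u * \<bar>a\<bar> < C * r" by simp
  qed
  define \<kappa> where "\<kappa> = (1 - u\<^sup>2) / (1 + u\<^sup>2)"
  define \<mu> where "\<mu> = 2 * u / (1 + u\<^sup>2)"
  have pos: "0 < 1 + u\<^sup>2" by (simp add: add_pos_nonneg)
  have "\<kappa>\<^sup>2 + \<mu>\<^sup>2 = ((1 - u\<^sup>2)\<^sup>2 + (2 * u)\<^sup>2) / (1 + u\<^sup>2)\<^sup>2"
    unfolding \<kappa>_def \<mu>_def by (simp add: power_divide add_divide_distrib)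
  also have "(1 - u\<^sup>2)\<^sup>2 + (2 * u)\<^sup>2 = (1 + u\<^sup>2)\<^sup>2" by (simp add: power2_eq_square algebra_simps)
  finally have circle: "\<kappa>\<^sup>2 + \<mu>\<^sup>2 = 1" using pos by simp
  then have circle': "\<kappa>\<^sup>2 + (- \<mu>)\<^sup>2 = 1" by simp
  have \<mu>: "0 < \<mu>" unfolding \<mu>_def using u pos by simp
  have \<kappa>: "\<kappa> - 1 = - (u * \<mu>)" unfolding \<kappa>_def \<mu>_def using pos by (simp add: field_simps power2_eq_square)
  have "2 * \<bar>B\<bar> \<le> \<bar>A + B\<bar> + \<bar>A - B\<bar>" for A B :: real by linarith
  from this[where A = "(\<kappa> - 1) * c" and B = "\<mu> * r"]
  have "2 * (\<mu> * r) \<le> \<bar>(\<kappa> - 1) * c + \<mu> * r\<bar> + \<bar>(\<kappa> - 1) * c + (- \<mu>) * r\<bar>"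
    using \<mu> r by simp
  then have "2 * (C * (\<mu> * r)) \<le> C * (\<bar>(\<kappa> - 1) * c + \<mu> * r\<bar> + \<bar>(\<kappa> - 1) * c + (- \<mu>) * r\<bar>)"
    using C by (simp add: mult_left_mono)
  also have "\<dots> \<le> 2 * ((\<kappa> - 1) * a)"
    using bound[OF circle] bound[OF circle'] by (simp add: distrib_left)
  finally have "C * (\<mu> * r) \<le> (\<kappa> - 1) * a" by simp
  also have "\<dots> = (u * \<mu>) * (- a)" unfolding \<kappa> by simp
  also have "\<dots> \<le> (u * \<mu>) * \<bar>a\<bar>" using \<mu> u(1) by (intro mult_left_mono) auto
  finally have "\<mu> * (C * r) \<le> \<mu> * (u * \<bar>a\<bar>)" by (simp add: ac_simps)
  then show False using \<mu> u by simp
qed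

lemma elliptope_not_sharp_point:
  fixes X :: "real^'n^'n"
  assumes X: "X \<in> elliptope" and ij: "i \<noteq> j" and c: "\<bar>X$i$j\<bar> < 1"
  shows "\<not> sharp_point elliptope X"
proof
  assume "sharp_point elliptope X"
  then obtain l C where l: "linear l" and C: "0 < C"
    and sharp: "\<forall>Y\<in>elliptope. C * norm (Y - X) \<le> l (Y - X)"
    unfolding sharp_point_def by blast
  define r where "r = sqrt (1 - (X$i$j)\<^sup>2)"
  have c2: "(X$i$j)\<^sup>2 < 1" using c by (simp add: abs_square_less_1)
  then have rr: "r\<^sup>2 = 1 - (X$i$j)\<^sup>2" and r: "0 < r" unfolding r_def by simp_all
  show False
  proof (rule unit_circle_no_linear_bound[OF C r])
    fix \<kappa> \<mu> :: real assume circle: "\<kappa>\<^sup>2 + \<mu>\<^sup>2 = 1"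
    define D where "D = (\<kappa> - 1) *\<^sub>R cross_entries X i + (\<mu> / r) *\<^sub>R cross_direction X i j"
    have "X + D \<in> elliptope"
      using elliptope_circle_curve[OF X ij c circle] unfolding D_def r_def by (simp add: add.assoc)
    then have "C * norm D \<le> l D" using sharp by fastforce
    moreover have "D$i$j = (\<kappa> - 1) * X$i$j + \<mu> * r"
    proof -
      have "1 - X$i$j * X$i$j = r * r" using rr by (simp add: power2_eq_square)
      then show ?thesis using ij r elliptopeD(3)[OF X]
        by (simp add: D_def cross_entries_def cross_direction_def)
    qed
    moreover have "l D = (\<kappa> - 1) * l (cross_entries X i) + \<mu> * (l (cross_direction X i j) / r)"
      unfolding D_def by (simp add: linear_add[OF l] linear_scale[OF l])
    ultimately show "C * \<bar>(\<kappa> - 1) * X$i$j + \<mu> * r\<bar>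
        \<le> (\<kappa> - 1) * l (cross_entries X i) + \<mu> * (l (cross_direction X i j) / r)"
      using abs_entry_le_norm[of D i j] C by (metis mult_left_mono order_trans less_imp_le)
  qed
qed

lemma elliptope_unit_entries_imp_ising:
  fixes X :: "real^'n^'n"
  assumes X: "X \<in> elliptope" and unit: "\<And>i j. i \<noteq> j \<Longrightarrow> \<bar>X$i$j\<bar> = 1"
  shows "X \<in> ising"
proof -
  have sx: "X$b$a = X$a$b" for a b using symmetric_matrix_entry[OF elliptopeD(1)[OF X]] by metis
  have dx: "X$a$a = 1" for a using elliptopeD(3)[OF X] by simp
  obtain a0 :: 'n where True by simp
  define s where "s = (\<chi> b. X$a0$b)"
  have s: "sign_vector s" unfolding sign_vector_def s_def
    using unit dx by (metis abs_if minus_minus vec_lambda_beta)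
  \<comment> \<open>e_a - s_a e_a0 is null for the quadratic form, hence in the kernel of X.\<close>
  have "X$b$a = s$b * s$a" for a b
  proof (cases "a = a0")
    case True
    then show ?thesis using dx sx by (simp add: s_def)
  next
    case False
    define x where "x = 1 *\<^sub>R axis a 1 + (- s$a) *\<^sub>R axis a0 (1::real)"
    have "x \<bullet> (X *v x) = 1 - (s$a)\<^sup>2"
      unfolding x_def quadratic_form_two_axes using dx sx[of a a0] by (simp add: s_def power2_eq_square)
    then have "x \<bullet> (X *v x) = 0" using sign_vector_square[OF s, of a] by (simp add: power2_eq_square)
    then have "X *v x = 0"
      by (rule psd_kernel_of_null_quadratic_form[OF elliptopeD(1)[OF X] elliptopeD(2)[OF X]])
    moreover have "(X *v x) $ b = 1 * X$b$a + (- s$a) * X$b$a0"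
      unfolding x_def by (rule matrix_vector_two_axes_nth)
    ultimately show ?thesis using sx[of a0 b] by (simp add: s_def)
  qed
  then have "X = ising_matrix s" by (simp add: vec_eq_iff ising_matrix_def)
  then show ?thesis unfolding ising_eq using s by blast
qed

lemma sharp_point_elliptope_iff:
  fixes X :: "real^'n^'n"
  assumes X: "X \<in> elliptope"
  shows "sharp_point elliptope X \<longleftrightarrow> X \<in> ising"
proof
  assume "sharp_point elliptope X"
  then have "\<bar>X$i$j\<bar> = 1" if "i \<noteq> j" for i j
    using elliptope_not_sharp_point[OF X that] elliptope_entry_bound[OF X, of i j] by linarith
  then show "X \<in> ising" by (rule elliptope_unit_entries_imp_ising[OF X])
next
  assume "X \<in> ising"
  then show "sharp_point elliptope X" unfolding ising_eq using ising_matrix_sharp_point by blast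
qed

section \<open>Automorphisms of the elliptope\<close>

lemma Aut_maps_ising:
  assumes \<sigma>: "\<sigma> \<in> Aut" and X: "X \<in> ising"
  shows "\<sigma> X \<in> ising"
proof -
  have aff: "affine_map_on elliptope \<sigma>" and bij: "bij_betw \<sigma> elliptope elliptope"
    using \<sigma> unfolding Aut_def by simp_all
  have inj: "inj_on \<sigma> elliptope" and img: "\<sigma> ` elliptope = elliptope"
    using bij by (simp_all add: bij_betw_def)
  have aff_inv: "affine_map_on elliptope (inv_into elliptope \<sigma>)"
    using affine_map_on_inv_into[OF convex_elliptope aff inj] unfolding img .
  obtain L where L: "linear L" "\<And>X Y. X \<in> elliptope \<Longrightarrow> Y \<in> elliptope \<Longrightarrow> \<sigma> X - \<sigma> Y = L (X - Y)"
    using elliptope_affine_map_linear[OF aff] by blast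
  obtain M where M: "linear M"
    "\<And>X Y. X \<in> \<sigma> ` elliptope \<Longrightarrow> Y \<in> \<sigma> ` elliptope \<Longrightarrow>
      inv_into elliptope \<sigma> X - inv_into elliptope \<sigma> Y = M (X - Y)"
    using elliptope_affine_map_linear[OF aff_inv] unfolding img by blast
  have XE: "X \<in> elliptope" using X ising_subset_elliptope by blast
  have "sharp_point elliptope X" using sharp_point_elliptope_iff[OF XE] X by simp
  from sharp_point_image[OF this XE L M inv_into_f_f[OF inj]]
  have "sharp_point elliptope (\<sigma> X)" unfolding img .
  then show ?thesis using sharp_point_elliptope_iff img XE by blast
qed

lemma Aut_eqI:
  assumes \<sigma>: "\<sigma> \<in> Aut" and \<tau>: "\<tau> \<in> Aut" and eq: "\<And>X. X \<in> ising \<Longrightarrow> \<sigma> X = \<tau> X"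
  shows "\<sigma> = \<tau>"
proof (rule extensionalityI)
  show "\<sigma> \<in> extensional elliptope" "\<tau> \<in> extensional elliptope" using \<sigma> \<tau> unfolding Aut_def by auto
  show "\<sigma> X = \<tau> X" if "X \<in> elliptope" for X
    using affine_maps_eq_on_elliptope_if_eq_on_ising[of \<sigma> \<tau> X] \<sigma> \<tau> eq that unfolding Aut_def by blast
qed

lemma finite_Aut: "finite (Aut :: (real^'n^'n \<Rightarrow> real^'n^'n) set)"
proof -
  have "inj_on (\<lambda>\<sigma>. restrict \<sigma> ising) (Aut :: (real^'n^'n \<Rightarrow> real^'n^'n) set)"
    by (rule inj_onI) (metis Aut_eqI restrict_apply')
  moreover have "(\<lambda>\<sigma>. restrict \<sigma> ising) ` (Aut :: (real^'n^'n \<Rightarrow> real^'n^'n) set)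
      \<subseteq> ising \<rightarrow>\<^sub>E ising"
    using Aut_maps_ising by auto
  then have "finite ((\<lambda>\<sigma>. restrict \<sigma> ising) ` (Aut :: (real^'n^'n \<Rightarrow> real^'n^'n) set))"
    by (rule finite_subset) (intro finite_PiE finite_ising)
  ultimately show ?thesis using finite_imageD by blast
qed

theorem lemma9:
  shows "finite (Aut :: (real^'n^'n \<Rightarrow> real^'n^'n) set) \<and>
    (\<forall>\<sigma>\<in>(Aut :: (real^'n^'n \<Rightarrow> real^'n^'n) set). \<forall>\<tau>\<in>Aut.
        (\<forall>X\<in>ising. \<sigma> X = \<tau> X) \<longrightarrow> \<sigma> = \<tau>)"
  using finite_Aut Aut_eqI by blast

end
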